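(* Let $\mathcal{V}=\{V_1,\ldots,V_n\}$ and $\mathbb{I}\in\{\mathbb{Z},\mathbb{Q},\mathbb{R}\}$. For every $e\in\mathcal{C}$, every variable $V\in\mathcal{V}$ and every symbolic environment $S^{\mathcal{C}}\in\mathcal{D}^{\mathcal{C}}$, we have $\gamma^{\mathcal{C}}(S^{\mathcal{C}})\models e\preceq\mathit{subst}(e,V,S^{\mathcal{C}}(V))$.
   Context: Expressions are generated by variables $X\in\mathcal{V}$, interval constants $[a,b]$ ($a\in\mathbb{I}\cup\{-\infty\}$, $b\in\mathbb{I}\cup\{+\infty\}$, $a\leq b$), and $e_1\diamond e_2$ with $\diamond\in\{+,-,\times,/\}$. For an environment $\rho:\mathcal{V}\to\mathbb{I}$: $[\![X]\!](\rho)=\{\rho(X)\}$; $[\![[a,b]]\!](\rho)=\{x\in\mathbb{I}\mid a\leq x\leq b\}$; $[\![e_1\diamond e_2]\!](\rho)=\{x\diamond y\mid x\in[\![e_1]\!](\rho),y\in[\![e_2]\!](\rho)\}$ for $\diamond\in\{+,-,\times\}$; $[\![e_1/e_2]\!](\rho)=\{x/y\mid\ldots,y\neq0\}$ if $\mathbb{I}\neq\mathbb{Z}$ and $\{\mathit{truncate}(x/y)\mid\ldots,y\neq0\}$ (rounding towards zero) if $\mathbb{I}=\mathbb{Z}$. $\mathcal{C}$ is the set of all such expressions together with an extra element $\top^{\mathcal{C}}$, with $[\![\top^{\mathcal{C}}]\!](\rho)=\mathbb{I}$. $\mathit{occ}(e)$ is the set of variables occurring in $e$, with $\mathit{occ}(\top^{\mathcal{C}})=\emptyset$.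 $\mathit{subst}(e,V,f)$ replaces every occurrence of $V$ in $e$ by $f$ (with $\mathit{subst}(\top^{\mathcal{C}},V,f)=\top^{\mathcal{C}}$), and for $f=\top^{\mathcal{C}}$: $\mathit{subst}(e,V,\top^{\mathcal{C}})=e$ if $V\notin\mathit{occ}(e)$ and $=\top^{\mathcal{C}}$ if $V\in\mathit{occ}(e)$. $\mathcal{D}^{\mathcal{C}}$ is the set of maps $S^{\mathcal{C}}:\mathcal{V}\to\mathcal{C}$ with no cyclic dependencies, i.e. there are no pairwise distinct variables $W_1,\ldots,W_m$ with $W_i\in\mathit{occ}(S^{\mathcal{C}}(W_{i+1}))$ for all $i<m$ and $W_m\in\mathit{occ}(S^{\mathcal{C}}(W_1))$. Its concretization is $\gamma^{\mathcal{C}}(S^{\mathcal{C}})=\{\rho:\mathcal{V}\to\mathbb{I}\mid\forall k,\ \rho(V_k)\in[\![S^{\mathcal{C}}(V_k)]\!](\rho)\}$. For a set $R$ of environments, $R\models e_1\preceq e_2$ means $\forall\rho\in R,\ [\![e_1]\!](\rho)\subseteq[\![e_2]\!](\rho)$. *)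

theory Defs
  imports Complex_Main
begin

datatype binop = Plus | Minus | Times | Divide

text \<open>Expressions over variables of type 'v and values of type 'a.
  Interval constants [a,b]: lower bound None means -infinity, upper bound None means +infinity.\<close>
datatype ('v, 'a) expr =
    Var 'v
  | Cst "'a option" "'a option"
  | Bin binop "('v, 'a) expr" "('v, 'a) expr"

datatype ('v, 'a) cexp = TopC | Ex "('v, 'a) expr"

fun wf_expr :: "('v, 'a::linorder) expr \<Rightarrow> bool" where
  "wf_expr (Var X) = True"
| "wf_expr (Cst lo hi) = (case (lo, hi) of (Some a, Some b) \<Rightarrow> a \<le> b | _ \<Rightarrow> True)"
| "wf_expr (Bin _ e1 e2) = (wf_expr e1 \<and> wf_expr e2)"

fun wf_cexp :: "('v, 'a::linorder) cexp \<Rightarrow> bool" where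
  "wf_cexp TopC = True"
| "wf_cexp (Ex e) = wf_expr e"

text \<open>Truncating integer division (rounding towards zero).\<close>
definition tdiv :: "int \<Rightarrow> int \<Rightarrow> int" where
  "tdiv x y = sgn x * sgn y * (\<bar>x\<bar> div \<bar>y\<bar>)"

fun sem :: "('a \<Rightarrow> 'a \<Rightarrow> 'a) \<Rightarrow> ('v, 'a::linordered_idom) expr \<Rightarrow> ('v \<Rightarrow> 'a) \<Rightarrow> 'a set" where
  "sem d (Var X) \<rho> = {\<rho> X}"
| "sem d (Cst lo hi) \<rho> =
     {x. (case lo of None \<Rightarrow> True | Some a \<Rightarrow> a \<le> x) \<and> (case hi of None \<Rightarrow> True | Some b \<Rightarrow> x \<le> b)}"
| "sem d (Bin Plus e1 e2) \<rho> = {x + y | x y. x \<in> sem d e1 \<rho> \<and> y \<in> sem d e2 \<rho>}"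
| "sem d (Bin Minus e1 e2) \<rho> = {x - y | x y. x \<in> sem d e1 \<rho> \<and> y \<in> sem d e2 \<rho>}"
| "sem d (Bin Times e1 e2) \<rho> = {x * y | x y. x \<in> sem d e1 \<rho> \<and> y \<in> sem d e2 \<rho>}"
| "sem d (Bin Divide e1 e2) \<rho> = {d x y | x y. x \<in> sem d e1 \<rho> \<and> y \<in> sem d e2 \<rho> \<and> y \<noteq> 0}"

fun semC :: "('a \<Rightarrow> 'a \<Rightarrow> 'a) \<Rightarrow> ('v, 'a::linordered_idom) cexp \<Rightarrow> ('v \<Rightarrow> 'a) \<Rightarrow> 'a set" where
  "semC d TopC \<rho> = UNIV"
| "semC d (Ex e) \<rho> = sem d e \<rho>"

fun occ :: "('v, 'a) expr \<Rightarrow> 'v set" where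
  "occ (Var X) = {X}"
| "occ (Cst _ _) = {}"
| "occ (Bin _ e1 e2) = occ e1 \<union> occ e2"

fun occC :: "('v, 'a) cexp \<Rightarrow> 'v set" where
  "occC TopC = {}"
| "occC (Ex e) = occ e"

fun subst_expr :: "('v, 'a) expr \<Rightarrow> 'v \<Rightarrow> ('v, 'a) expr \<Rightarrow> ('v, 'a) expr" where
  "subst_expr (Var X) V f = (if X = V then f else Var X)"
| "subst_expr (Cst lo hi) V f = Cst lo hi"
| "subst_expr (Bin op e1 e2) V f = Bin op (subst_expr e1 V f) (subst_expr e2 V f)"

fun substC :: "('v, 'a) cexp \<Rightarrow> 'v \<Rightarrow> ('v, 'a) cexp \<Rightarrow> ('v, 'a) cexp" where
  "substC TopC V f = TopC"
| "substC (Ex e) V TopC = (if V \<in> occ e then TopC else Ex e)"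
| "substC (Ex e) V (Ex f) = Ex (subst_expr e V f)"

definition noncyclic :: "('v \<Rightarrow> ('v, 'a) cexp) \<Rightarrow> bool" where
  "noncyclic S \<longleftrightarrow> \<not> (\<exists>ws. ws \<noteq> [] \<and> distinct ws
       \<and> (\<forall>i. Suc i < length ws \<longrightarrow> ws ! i \<in> occC (S (ws ! Suc i)))
       \<and> last ws \<in> occC (S (hd ws)))"

definition DC :: "('v \<Rightarrow> ('v, 'a::linorder) cexp) set" where
  "DC = {S. (\<forall>X. wf_cexp (S X)) \<and> noncyclic S}"

definition gammaC :: "('a \<Rightarrow> 'a \<Rightarrow> 'a) \<Rightarrow> ('v \<Rightarrow> ('v, 'a::linordered_idom) cexp) \<Rightarrow> ('v \<Rightarrow> 'a) set" where
  "gammaC d S = {\<rho>. \<forall>X. \<rho> X \<in> semC d (S X) \<rho>}"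

definition models_le :: "('a \<Rightarrow> 'a \<Rightarrow> 'a) \<Rightarrow> ('v \<Rightarrow> 'a) set \<Rightarrow> ('v, 'a::linordered_idom) cexp \<Rightarrow> ('v, 'a) cexp \<Rightarrow> bool" where
  "models_le d R e1 e2 \<longleftrightarrow> (\<forall>\<rho>\<in>R. semC d e1 \<rho> \<subseteq> semC d e2 \<rho>)"

end

theory Submission
  imports Defs
begin

(* Every environment rho in gammaC S satisfies rho V \<in> [[S V]] rho, and the collecting
   semantics is monotone in each variable occurrence: replacing the singleton {rho V} by a
   superset can only enlarge the set of values. *)

lemma sem_mono_subst_expr:
  assumes "\<rho> V \<in> sem d f \<rho>"
  shows "sem d e \<rho> \<subseteq> sem d (subst_expr e V f) \<rho>"
proof (induction e)
  case (Var X)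
  then show ?case using assms by auto
next
  case (Cst lo hi)
  then show ?case by simp
next
  case (Bin op e1 e2)
  then show ?case by (cases op) (simp; blast)+
qed

lemma semC_mono_substC:
  assumes "\<rho> V \<in> semC d f \<rho>"
  shows "semC d e \<rho> \<subseteq> semC d (substC e V f) \<rho>"
proof (cases e)
  case TopC
  then show ?thesis by simp
next
  case (Ex e')
  show ?thesis
  proof (cases f)
    case TopC
    then show ?thesis using Ex by simp
  next
    case (Ex f')
    then show ?thesis using \<open>e = Ex e'\<close> assms sem_mono_subst_expr by simp
  qed
qed

lemma models_le_substC:
  "models_le d (gammaC d S) e (substC e V (S V))"
  unfolding models_le_def gammaC_def
proof
  fix \<rho> assume "\<rho> \<in> {\<rho>. \<forall>X. \<rho> X \<in> semC d (S X) \<rho>}"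
  then have "\<rho> V \<in> semC d (S V) \<rho>" by simp
  then show "semC d e \<rho> \<subseteq> semC d (substC e V (S V)) \<rho>" by (rule semC_mono_substC)
qed

theorem theorem5:
  fixes dummy :: "'v::finite"
  shows
   "(\<forall>(e::('v, int) cexp) (V::'v) S. wf_cexp e \<and> S \<in> DC \<longrightarrow>
        models_le tdiv (gammaC tdiv S) e (substC e V (S V)))
  \<and> (\<forall>(e::('v, rat) cexp) (V::'v) S. wf_cexp e \<and> S \<in> DC \<longrightarrow>
        models_le (/) (gammaC (/) S) e (substC e V (S V)))
  \<and> (\<forall>(e::('v, real) cexp) (V::'v) S. wf_cexp e \<and> S \<in> DC \<longrightarrow>
        models_le (/) (gammaC (/) S) e (substC e V (S V)))"
  by (simp add: models_le_substC)

end
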